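(* Let $m=2$ attributes take values in $\{1,\dots,d\}$, let $p(x,z)=p(z)p(x\mid z)$ be a training distribution with attribute support $\mathcal{Z}^{\mathsf{train}}$, and suppose $p(\cdot\mid z)$ is an additive energy distribution, not uniform, for every $z\in\mathcal{Z}^{\times}$. Suppose $\mathsf{DAff}(\mathcal{Z}^{\mathsf{train}})\ne\mathcal{Z}^{\times}$. Then there exists an additive energy model $\hat p(x\mid z)=\frac{1}{\hat{\mathbb{Z}}(z)}\exp(-\langle\sigma(z),\hat E(x)\rangle)$ that maximizes the likelihood and exactly matches the training distributions, i.e. $\hat p(\cdot\mid z)=p(\cdot\mid z)$ for all $z\in\mathcal{Z}^{\mathsf{train}}$, but such that $\hat p(\cdot\mid z)\ne p(\cdot\mid z)$ for some $z\in\mathcal{Z}^{\times}$.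
   Context: $\sigma(z)\in\{0,1\}^{2d}$ is the concatenation of the one-hot encodings of $z_1,z_2$. An additive energy distribution family is $p(x\mid z)=\frac{1}{\mathbb{Z}(z)}\exp(-\langle\sigma(z),E(x)\rangle)$ with $E:\mathbb{R}^n\to\mathbb{R}^{2d}$ and $\mathbb{Z}(z)=\int\exp(-\langle\sigma(z),E(x)\rangle)dx<\infty$. $\mathcal{Z}_i^{\mathsf{train}}$ is the set of values of the $i$-th coordinate on $\mathcal{Z}^{\mathsf{train}}$ and $\mathcal{Z}^{\times}=\mathcal{Z}_1^{\mathsf{train}}\times\mathcal{Z}_2^{\mathsf{train}}$. For finite $\mathcal{A}=\{z^{(1)},\dots,z^{(k)}\}$, $\mathsf{DAff}(\mathcal{A})=\{z\in\{1,\dots,d\}^2:\exists\alpha\in\mathbb{R}^k,\ \sum_i\alpha_i=1,\ \sigma(z)=\sum_i\alpha_i\sigma(z^{(i)})\}$. *)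

theory Defs
  imports "HOL-Analysis.Analysis"
begin

text \<open>The embedding sigma(z) in {0,1}^(2d)
  is the concatenation of the one-hot encodings of z1 and z2; coordinates are indexed by
  {1..2d}: coordinate z1 for the first block, coordinate d + z2 for the second block.
  Outside {1..2d} the function is 0.\<close>

definition attrs :: "nat \<Rightarrow> (nat \<times> nat) set" where
  "attrs d = {1..d} \<times> {1..d}"

definition sigma :: "nat \<Rightarrow> nat \<times> nat \<Rightarrow> nat \<Rightarrow> real" where
  "sigma d z i = (if i = fst z then 1 else 0) + (if i = d + snd z then 1 else 0)"

definition pair_energy :: "nat \<Rightarrow> nat \<times> nat \<Rightarrow> (nat \<Rightarrow> real) \<Rightarrow> real" where
  "pair_energy d z e = (\<Sum>i\<in>{1..2*d}. sigma d z i * e i)"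

definition unnorm :: "nat \<Rightarrow> ('a \<Rightarrow> nat \<Rightarrow> real) \<Rightarrow> nat \<times> nat \<Rightarrow> 'a \<Rightarrow> real" where
  "unnorm d E z x = exp (- pair_energy d z (E x))"

definition partition :: "nat \<Rightarrow> ('a::euclidean_space \<Rightarrow> nat \<Rightarrow> real) \<Rightarrow> nat \<times> nat \<Rightarrow> real" where
  "partition d E z = (\<integral>x. unnorm d E z x \<partial>lborel)"

definition aed :: "nat \<Rightarrow> ('a::euclidean_space \<Rightarrow> nat \<Rightarrow> real) \<Rightarrow> nat \<times> nat \<Rightarrow> 'a \<Rightarrow> real" where
  "aed d E z x = unnorm d E z x / partition d E z"

definition aed_wf :: "nat \<Rightarrow> ('a::euclidean_space \<Rightarrow> nat \<Rightarrow> real) \<Rightarrow> nat \<times> nat \<Rightarrow> bool" where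
  "aed_wf d E z \<longleftrightarrow> integrable lborel (unnorm d E z)"

definition same_dist :: "('a::euclidean_space \<Rightarrow> real) \<Rightarrow> ('a \<Rightarrow> real) \<Rightarrow> bool" where
  "same_dist p q \<longleftrightarrow> (AE x in lborel. p x = q x)"

definition uniform_dist :: "('a::euclidean_space \<Rightarrow> real) \<Rightarrow> bool" where
  "uniform_dist p \<longleftrightarrow> (\<exists>c. same_dist p (\<lambda>_. c))"

definition Zcross :: "(nat \<times> nat) set \<Rightarrow> (nat \<times> nat) set" where
  "Zcross Z = (fst ` Z) \<times> (snd ` Z)"

definition DAff :: "nat \<Rightarrow> (nat \<times> nat) set \<Rightarrow> (nat \<times> nat) set" where
  "DAff d A = {z \<in> attrs d. \<exists>\<alpha> :: nat \<times> nat \<Rightarrow> real.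
      (\<Sum>a\<in>A. \<alpha> a) = 1 \<and> sigma d z = (\<lambda>i. \<Sum>a\<in>A. \<alpha> a * sigma d a i)}"

end

theory Submission imports Defs begin

text \<open>Join the coordinate \<open>i\<close> of the first attribute to the coordinate \<open>d + j\<close> of the second one
  for every training pair \<open>(i, j)\<close>. If \<open>d + j0\<close> is reachable from \<open>i0\<close>, an alternating sum of
  training embeddings along the path is an affine combination equal to \<open>sigma(i0, j0)\<close>; so for
  \<open>(i0, j0)\<close> outside the discrete affine hull the two coordinates lie in different components, and a
  \<open>\<plusminus>1\<close> potential on the component of \<open>i0\<close> gives a vector \<open>v\<close> orthogonal to all training embeddings
  but not to \<open>sigma(i0, j0)\<close>. Adding \<open>v\<close> to the energy on the unit box leaves every training
  conditional unchanged and multiplies the density at \<open>(i0, j0)\<close> by a factor that differs inside and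
  outside the box, which no normalisation can undo.\<close>

lemma pair_energy_attrs:
  assumes "z \<in> attrs d"
  shows "pair_energy d z e = e (fst z) + e (d + snd z)"
proof -
  have "pair_energy d z e
      = (\<Sum>i\<in>{1..2*d}. (if i = fst z then e i else 0) + (if i = d + snd z then e i else 0))"
    unfolding pair_energy_def sigma_def by (intro sum.cong) auto
  also have "\<dots> = e (fst z) + e (d + snd z)"
    using assms by (simp add: sum.distrib attrs_def mem_Times_iff)
  finally show ?thesis .
qed

lemma pair_energy_add_scaled:
  "pair_energy d z (\<lambda>i. e i + c * v i) = pair_energy d z e + c * pair_energy d z v"
  unfolding pair_energy_def by (simp add: sum.distrib sum_distrib_left algebra_simps)

lemma finite_attrs_subset: "Z \<subseteq> attrs d \<Longrightarrow> finite Z"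
  unfolding attrs_def by (rule finite_subset) auto

lemma DAff_subset_Zcross:
  assumes Z: "Z \<subseteq> attrs d"
  shows "DAff d Z \<subseteq> Zcross Z"
proof
  fix z assume "z \<in> DAff d Z"
  then obtain \<alpha> where z: "z \<in> attrs d" and comb: "\<And>i. sigma d z i = (\<Sum>a\<in>Z. \<alpha> a * sigma d a i)"
    unfolding DAff_def by (blast dest: fun_cong)
  have hit: "\<exists>a\<in>Z. i = fst a \<or> i = d + snd a" if "i \<in> {fst z, d + snd z}" for i
  proof -
    have "(\<Sum>a\<in>Z. \<alpha> a * sigma d a i) \<noteq> 0"
      using that z comb[of i] by (auto simp: sigma_def attrs_def)
    then obtain a where "a \<in> Z" "sigma d a i \<noteq> 0"
      by (metis (no_types, lifting) mult_zero_right sum.neutral)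
    then show ?thesis by (auto simp: sigma_def split: if_splits)
  qed
  have "\<exists>a\<in>Z. fst z = fst a" and "\<exists>a\<in>Z. snd z = snd a"
    using hit[of "fst z"] hit[of "d + snd z"] z Z by (auto simp: attrs_def)
  then show "z \<in> Zcross Z"
    unfolding Zcross_def by (auto simp: mem_Times_iff)
qed

definition attr_graph :: "nat \<Rightarrow> (nat \<times> nat) set \<Rightarrow> nat rel" where
  "attr_graph d Z = {(n, m). \<exists>a\<in>Z. {n, m} = {fst a, d + snd a}}"

lemma attr_graph_reachable_combination:
  assumes Z: "Z \<subseteq> attrs d" and "i0 \<le> d" and "(i0, n) \<in> (attr_graph d Z)\<^sup>*"
  shows "\<exists>\<alpha>. sum \<alpha> Z = (if d < n then 1 else 0)
           \<and> (\<forall>i. (\<Sum>a\<in>Z. \<alpha> a * sigma d a i)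
                    = indicator {i0} i + (if d < n then 1 else -1) * indicator {n} i)"
  using assms(3)
proof (induction rule: rtrancl_induct)
  case base
  show ?case using \<open>i0 \<le> d\<close> by (intro exI[of _ "\<lambda>_. 0"]) simp
next
  case (step n m)
  from step.hyps(2) obtain a where a: "a \<in> Z" "{n, m} = {fst a, d + snd a}"
    unfolding attr_graph_def by blast
  from a Z have sides: "d < m \<longleftrightarrow> \<not> d < n"
    and sigma_a: "\<And>i. sigma d a i = indicator {n} i + indicator {m} i"
    by (auto simp: attrs_def doubleton_eq_iff sigma_def)
  from step.IH obtain \<alpha> where
    sum_\<alpha>: "sum \<alpha> Z = (if d < n then 1 else 0)" and
    comb_\<alpha>: "\<And>i. (\<Sum>b\<in>Z. \<alpha> b * sigma d b i)
                  = indicator {i0} i + (if d < n then 1 else -1) * indicator {n} i"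
    by blast
  define s :: real where "s = (if d < m then 1 else -1)"
  define \<beta> where "\<beta> b = \<alpha> b + (if b = a then s else 0)" for b
  have fin: "finite Z" using Z by (rule finite_attrs_subset)
  have "sum \<beta> Z = sum \<alpha> Z + s"
    using fin a(1) by (simp add: \<beta>_def sum.distrib)
  moreover have "(\<Sum>b\<in>Z. \<beta> b * sigma d b i) = (\<Sum>b\<in>Z. \<alpha> b * sigma d b i) + s * sigma d a i" for i
  proof -
    have "(\<Sum>b\<in>Z. \<beta> b * sigma d b i)
        = (\<Sum>b\<in>Z. \<alpha> b * sigma d b i) + (\<Sum>b\<in>Z. if b = a then s * sigma d a i else 0)"
      unfolding sum.distrib[symmetric] by (intro sum.cong) (auto simp: \<beta>_def distrib_right)
    then show ?thesis using fin a(1) by simp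
  qed
  ultimately show ?case
    using sum_\<alpha> comb_\<alpha> sides sigma_a
    by (intro exI[of _ \<beta>]) (auto simp: s_def algebra_simps)
qed

lemma attr_graph_reachable_DAff:
  assumes Z: "Z \<subseteq> attrs d" and z: "z \<in> attrs d"
    and "(fst z, d + snd z) \<in> (attr_graph d Z)\<^sup>*"
  shows "z \<in> DAff d Z"
proof -
  have "d < d + snd z" "fst z \<le> d" using z by (auto simp: attrs_def)
  with attr_graph_reachable_combination[OF Z _ assms(3)] obtain \<alpha> where
    "sum \<alpha> Z = 1" "\<forall>i. (\<Sum>a\<in>Z. \<alpha> a * sigma d a i) = indicator {fst z} i + indicator {d + snd z} i"
    by auto
  moreover have "sigma d z = (\<lambda>i. indicator {fst z} i + indicator {d + snd z} i)"
    by (auto simp: sigma_def)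
  ultimately show ?thesis using z unfolding DAff_def by auto
qed

lemma separating_energy:
  assumes Z: "Z \<subseteq> attrs d" and z0: "z0 \<in> attrs d" "z0 \<notin> DAff d Z"
  obtains v where "\<And>a. a \<in> Z \<Longrightarrow> pair_energy d a v = 0" and "pair_energy d z0 v = 1"
proof
  let ?R = "(attr_graph d Z)\<^sup>*"
  define v where "v n = (if (fst z0, n) \<in> ?R then if n \<le> d then 1 else -1 else 0 :: real)" for n
  show "pair_energy d a v = 0" if a: "a \<in> Z" for a
  proof -
    have "(fst a, d + snd a) \<in> attr_graph d Z" "(d + snd a, fst a) \<in> attr_graph d Z"
      using a unfolding attr_graph_def by blast+
    then have "(fst z0, fst a) \<in> ?R \<longleftrightarrow> (fst z0, d + snd a) \<in> ?R"
      by (meson rtrancl_into_rtrancl)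
    then show ?thesis
      using a Z pair_energy_attrs[of a d v] by (auto simp: v_def attrs_def)
  qed
  have "(fst z0, d + snd z0) \<notin> ?R"
    using attr_graph_reachable_DAff[OF Z z0(1)] z0(2) by blast
  then show "pair_energy d z0 v = 1"
    using z0(1) pair_energy_attrs[of z0 d v] by (auto simp: v_def attrs_def)
qed

lemma AE_imp_ex_in:
  assumes "AE x in M. P x" "A \<in> sets M" "emeasure M A \<noteq> 0"
  shows "\<exists>x\<in>A. P x"
proof (rule ccontr)
  assume none: "\<not> (\<exists>x\<in>A. P x)"
  from assms(1) obtain N where N: "{x \<in> space M. \<not> P x} \<subseteq> N" "emeasure M N = 0" "N \<in> sets M"
    by (rule AE_E)
  have "A \<subseteq> N" using N(1) none sets.sets_into_space[OF assms(2)] by auto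
  then have "emeasure M A \<le> emeasure M N" using N(3) by (rule emeasure_mono)
  with N(2) assms(3) show False by simp
qed

lemma integral_lborel_pos:
  fixes f :: "'a::euclidean_space \<Rightarrow> real"
  assumes f: "integrable lborel f" and pos: "\<And>x. f x > 0"
  shows "integral\<^sup>L lborel f > 0"
proof -
  have "integral\<^sup>L lborel f \<noteq> 0"
  proof
    assume "integral\<^sup>L lborel f = 0"
    then have "AE x in lborel. f x = 0"
      using integral_nonneg_eq_0_iff_AE[OF f] pos by (simp add: less_imp_le)
    from AE_imp_ex_in[OF this, of UNIV] obtain x where "f x = 0" by auto
    with pos[of x] show False by simp
  qed
  with pos show ?thesis by (simp add: less_imp_le order_le_neq_trans)
qed

lemma partition_pos: "aed_wf d E z \<Longrightarrow> partition d E z > 0"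
  unfolding aed_wf_def partition_def by (rule integral_lborel_pos) (simp_all add: unnorm_def)

definition shift_on :: "'a set \<Rightarrow> (nat \<Rightarrow> real) \<Rightarrow> ('a \<Rightarrow> nat \<Rightarrow> real) \<Rightarrow> 'a \<Rightarrow> nat \<Rightarrow> real" where
  "shift_on B v E x i = E x i + indicator B x * v i"

lemma unnorm_shift_on:
  "unnorm d (shift_on B v E) z x = unnorm d E z x * exp (- indicator B x * pair_energy d z v)"
  unfolding unnorm_def shift_on_def pair_energy_add_scaled by (simp add: exp_add[symmetric])

lemma aed_wf_shift_on:
  assumes "aed_wf d E z" "B \<in> sets lborel"
  shows "aed_wf d (shift_on B v E) z"
proof -
  have "unnorm d (shift_on B v E) z
      = (\<lambda>x. unnorm d E z x + indicator B x *\<^sub>R ((exp (- pair_energy d z v) - 1) * unnorm d E z x))"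
    by (auto simp: unnorm_shift_on indicator_def algebra_simps)
  then show ?thesis
    using assms unfolding aed_wf_def
    by (simp only:) (intro Bochner_Integration.integrable_add integrable_mult_indicator integrable_mult_right)
qed

lemma aed_shift_on_orthogonal:
  assumes "pair_energy d z v = 0"
  shows "aed d (shift_on B v E) z = aed d E z"
proof -
  have "unnorm d (shift_on B v E) z = unnorm d E z"
    using assms by (simp add: fun_eq_iff unnorm_shift_on)
  then show ?thesis unfolding aed_def partition_def by simp
qed

lemma not_same_dist_shift_on:
  assumes wf: "aed_wf d E z" and B: "B \<in> sets lborel"
    and B_pos: "emeasure lborel B \<noteq> 0" and Compl_B_pos: "emeasure lborel (- B) \<noteq> 0"
    and v: "pair_energy d z v \<noteq> 0"
  shows "\<not> same_dist (aed d (shift_on B v E) z) (aed d E z)"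
proof
  assume same: "same_dist (aed d (shift_on B v E) z) (aed d E z)"
  define c where "c = partition d (shift_on B v E) z / partition d E z"
  have "partition d E z > 0" "partition d (shift_on B v E) z > 0"
    using wf aed_wf_shift_on[OF wf B] by (simp_all add: partition_pos)
  then have "AE x in lborel. exp (- indicator B x * pair_energy d z v) = c"
    using same unfolding same_dist_def aed_def unnorm_shift_on c_def
    by (elim AE_mp) (auto simp: unnorm_def field_simps)
  from AE_imp_ex_in[OF this B B_pos] AE_imp_ex_in[OF this _ Compl_B_pos] B
  have "exp (- pair_energy d z v) = 1" by auto
  with v show False by simp
qed

lemma emeasure_lborel_Compl_box: "emeasure lborel (- box a (b::'a::euclidean_space)) = \<infinity>"
proof -
  have finite: "emeasure lborel (box a b) \<noteq> \<infinity>"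
    using emeasure_lborel_box_finite by (rule less_imp_neq)
  have "emeasure lborel (UNIV - box a b) = emeasure lborel (UNIV :: 'a set) - emeasure lborel (box a b)"
    using finite by (intro emeasure_Diff) simp_all
  with finite show ?thesis by (simp add: Compl_eq_Diff_UNIV)
qed

theorem theorem10:
  fixes d :: nat and Ztrain :: "(nat \<times> nat) set"
    and E :: "'a::euclidean_space \<Rightarrow> nat \<Rightarrow> real"
  assumes "d \<ge> 1"
    and "Ztrain \<subseteq> attrs d" and "Ztrain \<noteq> {}"
    and "\<forall>z\<in>Zcross Ztrain. aed_wf d E z"
    and "\<forall>z\<in>Zcross Ztrain. \<not> uniform_dist (aed d E z)"
    and "DAff d Ztrain \<noteq> Zcross Ztrain"
  shows "\<exists>Ehat :: 'a \<Rightarrow> nat \<Rightarrow> real.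
           (\<forall>z\<in>Zcross Ztrain. aed_wf d Ehat z)
         \<and> (\<forall>z\<in>Ztrain. same_dist (aed d Ehat z) (aed d E z))
         \<and> (\<exists>z\<in>Zcross Ztrain. \<not> same_dist (aed d Ehat z) (aed d E z))"
proof -
  from assms(6) DAff_subset_Zcross[OF assms(2)]
  obtain z0 where z0: "z0 \<in> Zcross Ztrain" "z0 \<notin> DAff d Ztrain" by blast
  have "Zcross Ztrain \<subseteq> attrs d"
    using assms(2) by (auto simp: Zcross_def attrs_def)
  with z0 obtain v where train: "\<And>a. a \<in> Ztrain \<Longrightarrow> pair_energy d a v = 0"
    and new: "pair_energy d z0 v = 1"
    using separating_energy[OF assms(2)] by blast
  define B :: "'a set" where "B = box 0 One"
  have "emeasure lborel B \<noteq> 0" "emeasure lborel (- B) \<noteq> 0"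
    by (simp_all add: B_def inner_diff_left emeasure_lborel_Compl_box)
  then have "\<not> same_dist (aed d (shift_on B v E) z0) (aed d E z0)"
    using assms(4) z0(1) new by (intro not_same_dist_shift_on) (simp_all add: B_def)
  moreover have "same_dist (aed d (shift_on B v E) z) (aed d E z)" if "z \<in> Ztrain" for z
    using train[OF that] by (simp add: aed_shift_on_orthogonal same_dist_def)
  moreover have "aed_wf d (shift_on B v E) z" if "z \<in> Zcross Ztrain" for z
    using assms(4) that by (simp add: aed_wf_shift_on B_def)
  ultimately show ?thesis using z0(1) by blast
qed

end
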